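(* Let $n>1$. Let $\alpha_1,\dots,\alpha_n\ge0$ with $\alpha_p,\alpha_q\neq0$ for some $p\neq q$ and $\sum_{i=1}^n\alpha_i^2=1$. Let $z_0\in\mathbb{T}^n$ and, for each $i$, let $\varphi_i\in H^\infty(\mathbb{D}^n)$ be an inner function independent of the variable $z_i$ whose value $\varphi_i(z_0)=\lim_{r\to1^-}\varphi_i(rz_0)$ is well defined with $|\varphi_i(z_0)|=1$. Put $\zeta_i=\prod_{j\neq i}z_j$, $\beta_i=(\zeta_i\varphi_i)(z_0)$, and \[ \varphi=\sum_{i=1}^n\alpha_i\bar\beta_i\zeta_i\varphi_i\in H^\infty(\mathbb{D}^n). \] Let $\mathcal{Q}=\ker\big(\prod_{i=1}^nT_{z_i}^*\big)\subseteq H^2(\mathbb{T}^n)$. Then $S_\varphi=P_{\mathcal{Q}}T_\varphi|_{\mathcal{Q}}$ does not admit any lift, i.e. there is no $\phi\in\mathcal{S}(\mathbb{D}^n)$ with $S_\varphi=P_{\mathcal{Q}}T_\phi|_{\mathcal{Q}}$.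
   Context: $H^2(\mathbb{T}^n)$ is the Hardy space of $\mathbb{D}^n$; $T_\varphi f=\varphi f$; $P_{\mathcal{Q}}$ is the orthogonal projection onto $\mathcal{Q}$ (a quotient module, i.e. invariant under all $T_{z_i}^*$). An inner function is $\varphi\in H^\infty(\mathbb{D}^n)$ with radial boundary values of modulus $1$ a.e. on $\mathbb{T}^n$. $\mathcal{S}(\mathbb{D}^n)$ is the closed unit ball of $H^\infty(\mathbb{D}^n)$. *)

theory Defs
  imports "HOL-Analysis.Analysis"
begin

text \<open>Functions on the polydisc are represented by their Taylor coefficient families
  c :: ('n \<Rightarrow> nat) \<Rightarrow> complex (multi-index to coefficient); the index type 'n
  is a finite type with CARD('n) = n.  H^2(T^n) is identified (isometrically) with
  square-summable coefficient families.\<close>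

definition polydisc :: "(complex ^ 'n) set" where
  "polydisc = {z. \<forall>i. cmod (z $ i) < 1}"

definition monom :: "complex ^ 'n \<Rightarrow> ('n::finite \<Rightarrow> nat) \<Rightarrow> complex" where
  "monom z a = (\<Prod>i\<in>UNIV. (z $ i) ^ (a i))"

definition fn :: "(('n::finite \<Rightarrow> nat) \<Rightarrow> complex) \<Rightarrow> complex ^ 'n \<Rightarrow> complex" where
  "fn c z = (\<Sum>\<^sub>\<infinity>a. c a * monom z a)"

definition Hinf :: "(('n::finite \<Rightarrow> nat) \<Rightarrow> complex) set" where
  "Hinf = {c. (\<forall>z\<in>polydisc. (\<lambda>a. c a * monom z a) summable_on UNIV) \<and>
              (\<exists>M. \<forall>z\<in>polydisc. cmod (fn c z) \<le> M)}"

definition Schur :: "(('n::finite \<Rightarrow> nat) \<Rightarrow> complex) set" where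
  "Schur = {c. c \<in> Hinf \<and> (\<forall>z\<in>polydisc. cmod (fn c z) \<le> 1)}"

definition torus_pt :: "real ^ 'n \<Rightarrow> complex ^ 'n" where
  "torus_pt \<theta> = (\<chi> i. cis (\<theta> $ i))"

text \<open>Inner function: radial boundary values of modulus 1 a.e. on T^n
  (T^n parametrised by angles; periodicity makes a.e. on R^n equivalent).\<close>
definition inner_fun :: "(('n::finite \<Rightarrow> nat) \<Rightarrow> complex) \<Rightarrow> bool" where
  "inner_fun c \<longleftrightarrow> c \<in> Hinf \<and>
     (AE \<theta> in lborel. \<exists>L. ((\<lambda>r. fn c (r *\<^sub>R torus_pt \<theta>)) \<longlongrightarrow> L) (at_left 1) \<and> cmod L = 1)"

definition H2 :: "(('n::finite \<Rightarrow> nat) \<Rightarrow> complex) set" where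
  "H2 = {f. (\<lambda>a. (cmod (f a))\<^sup>2) summable_on UNIV}"

definition conv :: "(('n::finite \<Rightarrow> nat) \<Rightarrow> complex) \<Rightarrow> (('n \<Rightarrow> nat) \<Rightarrow> complex) \<Rightarrow> ('n \<Rightarrow> nat) \<Rightarrow> complex" where
  "conv c f a = (\<Sum>b\<in>{b. b \<le> a}. c b * f (\<lambda>i. a i - b i))"

definition Toep :: "(('n::finite \<Rightarrow> nat) \<Rightarrow> complex) \<Rightarrow> (('n \<Rightarrow> nat) \<Rightarrow> complex) \<Rightarrow> ('n \<Rightarrow> nat) \<Rightarrow> complex" where
  "Toep c f = conv c f"

definition mono_coeff :: "('n \<Rightarrow> nat) \<Rightarrow> ('n \<Rightarrow> nat) \<Rightarrow> complex" where
  "mono_coeff g = (\<lambda>a. if a = g then 1 else 0)"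

text \<open>Adjoint of T_{z_i} on coefficients (backward shift in variable i), and the
  product of all T_{z_i}^* (they commute): shifts every index by one.\<close>
definition Tz_adj :: "'n \<Rightarrow> (('n \<Rightarrow> nat) \<Rightarrow> complex) \<Rightarrow> ('n \<Rightarrow> nat) \<Rightarrow> complex" where
  "Tz_adj i f = (\<lambda>a. f (a(i := a i + 1)))"

definition Tz_adj_prod :: "(('n \<Rightarrow> nat) \<Rightarrow> complex) \<Rightarrow> ('n \<Rightarrow> nat) \<Rightarrow> complex" where
  "Tz_adj_prod f = (\<lambda>a. f (\<lambda>i. a i + 1))"

definition Qmod :: "(('n::finite \<Rightarrow> nat) \<Rightarrow> complex) set" where
  "Qmod = {f \<in> H2. Tz_adj_prod f = (\<lambda>_. 0)}"

text \<open>Orthogonal projection onto Q (in the orthonormal monomial basis, Q is the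
  closed span of the monomials z^a with some a_i = 0).\<close>
definition projQ :: "(('n \<Rightarrow> nat) \<Rightarrow> complex) \<Rightarrow> ('n \<Rightarrow> nat) \<Rightarrow> complex" where
  "projQ f = (\<lambda>a. if (\<forall>i. 1 \<le> a i) then 0 else f a)"

definition has_lift :: "(('n::finite \<Rightarrow> nat) \<Rightarrow> complex) \<Rightarrow> bool" where
  "has_lift c \<longleftrightarrow> (\<exists>d\<in>Schur. \<forall>f\<in>Qmod. projQ (Toep d f) = projQ (Toep c f))"

end

theory Submission
  imports Defs
begin

text \<open>Testing a lift \<open>d\<close> on the constant \<open>1 \<in> Q\<close> shows that \<open>d\<close> and \<open>\<phi>\<close> have the same Taylor
  coefficients at every multi-index with a zero entry. Because \<open>\<phi>\<^sub>i\<close> does not depend on \<open>z\<^sub>i\<close>,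
  the summands \<open>\<alpha>\<^sub>i \<beta>\<^sub>i\<^sup>* \<zeta>\<^sub>i \<phi>\<^sub>i\<close> have pairwise disjoint coefficient supports there, and inner
  functions have coefficient square sum at least \<open>1\<close> (their boundary values are unimodular), so these
  coefficients alone have square sum at least \<open>\<Sum>\<^sub>i \<alpha>\<^sub>i\<^sup>2 = 1\<close>. A Schur function has coefficient
  square sum at most \<open>1\<close>, hence \<open>d\<close> vanishes at all remaining multi-indices, as \<open>\<phi>\<close> does, and
  \<open>d = \<phi>\<close>. But the radial limit of \<open>\<phi>\<close> at \<open>z\<^sub>0\<close> is \<open>\<Sum>\<^sub>i \<alpha>\<^sub>i\<close>, which exceeds \<open>1\<close> since two of the
  \<open>\<alpha>\<^sub>i\<close> are positive.\<close>

section \<open>Fourier analysis on the torus\<close>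

lemma integral_lborel_vec_prod:
  fixes f :: "'n::finite \<Rightarrow> real \<Rightarrow> complex"
  assumes int: "\<And>i. integrable lborel (f i)"
  shows "(\<integral>x. (\<Prod>i\<in>UNIV. f i (x $ i)) \<partial>(lborel::(real^'n) measure)) = (\<Prod>i\<in>UNIV. integral\<^sup>L lborel (f i))"
proof -
  interpret product_sigma_finite "\<lambda>_::(real^'n). lborel::real measure"
    by standard
  define ix :: "real^'n \<Rightarrow> 'n" where "ix b = (SOME i. b = axis i 1)" for b
  have ix: "ix (axis i 1) = i" for i
    unfolding ix_def by (rule someI2[of _ i]) (auto simp: axis_eq_axis)
  have bas: "(Basis :: (real^'n) set) = (\<lambda>i. axis i 1) ` UNIV"
    by (auto simp: Basis_vec_def)
  have injax: "inj (\<lambda>i::'n. axis i (1::real))"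
    by (auto simp: inj_def axis_eq_axis)
  have comp: "(\<Sum>b\<in>Basis. y b *\<^sub>R b) $ i = y (axis i 1)" for y :: "real^'n \<Rightarrow> real" and i
  proof -
    have "(\<Sum>b\<in>Basis. y b *\<^sub>R b) $ i = (\<Sum>b\<in>Basis. y b * (b $ i))"
      by (simp add: sum_component)
    also have "\<dots> = (\<Sum>j\<in>UNIV. y (axis j 1) * (axis j 1 $ i))"
      unfolding bas by (subst sum.reindex[OF injax]) simp
    also have "\<dots> = y (axis i 1)"
      by (simp add: axis_def if_distrib[of "\<lambda>x. _ * x"] cong: if_cong)
    finally show ?thesis .
  qed
  have meas: "(\<lambda>x. \<Prod>i\<in>UNIV. f i (x $ i)) \<in> borel_measurable (borel :: (real^'n) measure)"
    using int by measurable
  have "(\<integral>x. (\<Prod>i\<in>UNIV. f i (x $ i)) \<partial>(lborel::(real^'n) measure))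
       = (\<integral>y. (\<Prod>i\<in>UNIV. f i ((\<Sum>b\<in>Basis. y b *\<^sub>R b) $ i)) \<partial>(\<Pi>\<^sub>M b\<in>Basis. lborel))"
    by (subst lborel_eq, subst integral_distr) (use meas in auto)
  also have "\<dots> = (\<integral>y. (\<Prod>b\<in>Basis. f (ix b) (y b)) \<partial>(\<Pi>\<^sub>M b\<in>Basis. lborel))"
    unfolding comp by (simp add: bas prod.reindex[OF injax] ix)
  also have "\<dots> = (\<Prod>b\<in>Basis. integral\<^sup>L lborel (f (ix b)))"
    by (rule product_integral_prod) (auto intro: int)
  also have "\<dots> = (\<Prod>i\<in>UNIV. integral\<^sup>L lborel (f i))"
    by (simp add: bas prod.reindex[OF injax] ix)
  finally show ?thesis .
qed

lemma integral_cis_int_multiple: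
  fixes k :: int
  shows "(\<integral>t. indicator {0..2*pi} t *\<^sub>R cis (of_int k * t) \<partial>lborel)
           = (if k = 0 then complex_of_real (2*pi) else 0)"
proof -
  have "set_integrable lborel {0..2*pi} (\<lambda>t. cis (of_int k * t))"
    by (intro borel_integrable_atLeastAtMost') (intro continuous_intros)
  then have eq: "(\<integral>t. indicator {0..2*pi} t *\<^sub>R cis (of_int k * t) \<partial>lborel)
                   = integral {0..2*pi} (\<lambda>t. cis (of_int k * t))"
    using set_borel_integral_eq_integral(2) by (simp add: set_lebesgue_integral_def)
  show ?thesis
  proof (cases "k = 0")
    case True
    then show ?thesis using eq by (simp add: scaleR_conv_of_real)
  next
    case False
    define F where "F t = cis (of_int k * t) / (\<i> * of_int k)" for t
    have "(F has_vector_derivative cis (of_int k * t)) (at t within {0..2*pi})" for t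
    proof -
      have "((\<lambda>t. cis (of_int k * t)) has_vector_derivative (of_int k * (\<i> * cis (of_int k * t))))
              (at t within {0..2*pi})"
        unfolding has_vector_derivative_def
        by (auto intro!: derivative_eq_intros simp: scaleR_conv_of_real algebra_simps)
      from has_vector_derivative_divide[OF this, of "\<i> * of_int k"] show ?thesis
        using False unfolding F_def by (simp add: field_simps)
    qed
    then have "((\<lambda>t. cis (of_int k * t)) has_integral (F (2*pi) - F 0)) {0..2*pi}"
      by (intro fundamental_theorem_of_calculus) auto
    moreover have "F (2*pi) = F 0"
      using cis_multiple_2pi[of "of_int k"] unfolding F_def by (simp add: mult.commute)
    ultimately show ?thesis using eq False by (simp add: integral_unique)
  qed
qed

definition torus_box :: "(real ^ 'n::finite) set" where
  "torus_box = cbox 0 (\<chi> i. 2 * pi)"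

lemma measure_torus_box: "measure lborel (torus_box :: (real ^ 'n::finite) set) = (2 * pi) ^ CARD('n)"
proof -
  have "(\<chi> i. 2 * pi) \<bullet> b = 2 * pi" if "b \<in> (Basis :: (real ^ 'n) set)" for b
    using that by (auto simp: Basis_vec_def inner_axis)
  then show ?thesis
    unfolding torus_box_def measure_lborel_cbox_eq by (simp add: prod.cong[OF refl])
qed

lemma integral_torus_box_const:
  "(\<integral>\<theta>. indicator torus_box \<theta> * C \<partial>(lborel :: (real ^ 'n::finite) measure)) = C * (2 * pi) ^ CARD('n)"
  using measure_torus_box[where 'n='n] by (simp add: torus_box_def emeasure_lborel_cbox_finite)

lemma integrable_torus_box:
  fixes g :: "real ^ 'n::finite \<Rightarrow> 'b::{banach, second_countable_topology}"
  assumes "continuous_on UNIV g"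
  shows "integrable lborel (\<lambda>\<theta>. indicator torus_box \<theta> *\<^sub>R g \<theta>)"
  using assms by (intro borel_integrable_compact) (auto simp: torus_box_def intro: continuous_on_subset)

lemma norm_monom_torus_pt [simp]: "norm (monom (torus_pt \<theta>) a) = 1"
  unfolding monom_def torus_pt_def by (simp add: prod_norm[symmetric] norm_power)

lemma continuous_on_monom_torus_pt [continuous_intros]: "continuous_on S (\<lambda>\<theta>. monom (torus_pt \<theta>) a)"
  unfolding monom_def torus_pt_def by (intro continuous_intros)

lemma monom_torus_pt_mult_cnj:
  "monom (torus_pt \<theta>) a * cnj (monom (torus_pt \<theta>) b)
     = (\<Prod>i\<in>UNIV. cis (of_int (int (a i) - int (b i)) * \<theta> $ i))"
  unfolding monom_def torus_pt_def cnj_prod prod.distrib[symmetric]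
  by (intro prod.cong refl)
     (simp only: vec_lambda_beta complex_cnj_power cis_cnj Complex.DeMoivre cis_mult, simp add: algebra_simps)

lemma integral_torus_box_monom_mult_cnj:
  "(\<integral>\<theta>. indicator torus_box \<theta> *\<^sub>R (monom (torus_pt \<theta>) a * cnj (monom (torus_pt \<theta>) b))
      \<partial>(lborel :: (real ^ 'n::finite) measure))
     = (if a = b then complex_of_real ((2 * pi) ^ CARD('n)) else 0)"
proof -
  define f where "f i t = indicator {0..2*pi} t *\<^sub>R cis (of_int (int (a i) - int (b i)) * t)" for i t
  have "indicator torus_box \<theta> *\<^sub>R (monom (torus_pt \<theta>) a * cnj (monom (torus_pt \<theta>) b))
          = (\<Prod>i\<in>UNIV. f i (\<theta> $ i))" for \<theta> :: "real ^ 'n"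
  proof -
    have "indicator torus_box \<theta> = (\<Prod>i\<in>UNIV. indicator {0..2*pi} (\<theta> $ i) :: real)"
      by (auto simp: indicator_def torus_box_def mem_box_cart prod_zero_iff)
    then show ?thesis
      unfolding f_def monom_torus_pt_mult_cnj by (simp add: scaleR_conv_of_real prod.distrib)
  qed
  moreover have "integrable lborel (f i)" for i
    unfolding f_def by (rule borel_integrable_compact) (auto intro!: continuous_intros)
  ultimately have "(\<integral>\<theta>. indicator torus_box \<theta> *\<^sub>R (monom (torus_pt \<theta>) a * cnj (monom (torus_pt \<theta>) b))
                     \<partial>(lborel :: (real ^ 'n) measure)) = (\<Prod>i\<in>UNIV. integral\<^sup>L lborel (f i))"
    by (simp add: integral_lborel_vec_prod)
  also have "\<dots> = (\<Prod>i\<in>UNIV. if a i = b i then complex_of_real (2*pi) else 0)"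
    unfolding f_def integral_cis_int_multiple by simp
  also have "\<dots> = (if a = b then complex_of_real ((2*pi) ^ CARD('n)) else 0)"
    by (auto simp: fun_eq_iff)
  finally show ?thesis .
qed

lemma parseval_torus_box:
  fixes u :: "('n::finite \<Rightarrow> nat) \<Rightarrow> complex"
  assumes F: "finite F"
  shows "(\<integral>\<theta>. indicator torus_box \<theta> * (cmod (\<Sum>a\<in>F. u a * monom (torus_pt \<theta>) a))\<^sup>2
            \<partial>(lborel :: (real ^ 'n) measure))
         = (2 * pi) ^ CARD('n) * (\<Sum>a\<in>F. (cmod (u a))\<^sup>2)"
proof -
  define g where "g a b \<theta> = indicator torus_box \<theta> *\<^sub>R (monom (torus_pt \<theta>) a * cnj (monom (torus_pt \<theta>) b))"
    for a b and \<theta> :: "real ^ 'n"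
  have int: "integrable lborel (g a b)" for a b
    unfolding g_def by (intro integrable_torus_box continuous_intros)
  have "indicator torus_box \<theta> * (cmod (\<Sum>a\<in>F. u a * monom (torus_pt \<theta>) a))\<^sup>2
          = Re (\<Sum>a\<in>F. \<Sum>b\<in>F. u a * cnj (u b) * g a b \<theta>)" for \<theta>
  proof -
    have "complex_of_real ((cmod (\<Sum>a\<in>F. u a * monom (torus_pt \<theta>) a))\<^sup>2)
            = (\<Sum>a\<in>F. \<Sum>b\<in>F. u a * cnj (u b) * (monom (torus_pt \<theta>) a * cnj (monom (torus_pt \<theta>) b)))"
      unfolding complex_norm_square cnj_sum sum_product by (simp add: ac_simps)
    then have "complex_of_real (indicator torus_box \<theta> * (cmod (\<Sum>a\<in>F. u a * monom (torus_pt \<theta>) a))\<^sup>2)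
                 = (\<Sum>a\<in>F. \<Sum>b\<in>F. u a * cnj (u b) * g a b \<theta>)"
      unfolding g_def of_real_mult by (simp add: scaleR_conv_of_real sum_distrib_left ac_simps)
    then show ?thesis
      by (metis Re_complex_of_real)
  qed
  then have "(\<integral>\<theta>. indicator torus_box \<theta> * (cmod (\<Sum>a\<in>F. u a * monom (torus_pt \<theta>) a))\<^sup>2 \<partial>lborel)
               = Re (\<Sum>a\<in>F. \<Sum>b\<in>F. u a * cnj (u b) * integral\<^sup>L lborel (g a b))"
    using int by (simp add: integral_Re)
  also have "\<dots> = Re (\<Sum>a\<in>F. u a * cnj (u a) * complex_of_real ((2 * pi) ^ CARD('n)))"
    unfolding g_def integral_torus_box_monom_mult_cnj using F by (simp add: if_distrib sum.delta cong: if_cong)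
  also have "\<dots> = (2 * pi) ^ CARD('n) * (\<Sum>a\<in>F. (cmod (u a))\<^sup>2)"
    by (simp add: complex_norm_square[symmetric] sum_distrib_right mult.commute flip: of_real_sum)
  finally show ?thesis .
qed

lemma coeff_sq_sum_le_if_torus_poly_bounded:
  fixes u :: "('n::finite \<Rightarrow> nat) \<Rightarrow> complex"
  assumes F: "finite F" and bound: "\<And>\<theta>. cmod (\<Sum>a\<in>F. u a * monom (torus_pt \<theta>) a) \<le> B"
  shows "(\<Sum>a\<in>F. (cmod (u a))\<^sup>2) \<le> B\<^sup>2"
proof -
  let ?p = "\<lambda>\<theta>. \<Sum>a\<in>F. u a * monom (torus_pt \<theta>) a"
  have "(2 * pi) ^ CARD('n) * (\<Sum>a\<in>F. (cmod (u a))\<^sup>2)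
          = (\<integral>\<theta>. indicator torus_box \<theta> * (cmod (?p \<theta>))\<^sup>2 \<partial>(lborel :: (real ^ 'n) measure))"
    by (rule parseval_torus_box[OF F, symmetric])
  also have "\<dots> \<le> (\<integral>\<theta>. indicator torus_box \<theta> * B\<^sup>2 \<partial>(lborel :: (real ^ 'n) measure))"
  proof (rule integral_mono)
    show "integrable lborel (\<lambda>\<theta>::real ^ 'n. indicator torus_box \<theta> * (cmod (?p \<theta>))\<^sup>2)"
      using integrable_torus_box[of "\<lambda>\<theta>. (cmod (?p \<theta>))\<^sup>2"] by (simp add: continuous_intros)
    show "integrable lborel (\<lambda>\<theta>::real ^ 'n. indicator torus_box \<theta> * B\<^sup>2)"
      using integrable_torus_box[of "\<lambda>_. B\<^sup>2"] by simp
    show "indicator torus_box \<theta> * (cmod (?p \<theta>))\<^sup>2 \<le> indicator torus_box \<theta> * B\<^sup>2" for \<theta>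
      using bound[of \<theta>] by (intro mult_left_mono power_mono) auto
  qed
  also have "\<dots> = (2 * pi) ^ CARD('n) * B\<^sup>2"
    unfolding integral_torus_box_const by (simp add: mult.commute)
  finally show ?thesis by simp
qed

lemma integral_torus_box_sq_tendsto:
  fixes g :: "nat \<Rightarrow> real ^ 'n::finite \<Rightarrow> complex"
  assumes cont: "\<And>k. continuous_on UNIV (g k)"
    and bound: "\<And>k \<theta>. cmod (g k \<theta>) \<le> M"
    and lim: "AE \<theta> in lborel. \<exists>L. (\<lambda>k. g k \<theta>) \<longlonglongrightarrow> L \<and> cmod L = 1"
  shows "(\<lambda>k. \<integral>\<theta>. indicator torus_box \<theta> * (cmod (g k \<theta>))\<^sup>2 \<partial>lborel) \<longlonglongrightarrow> (2 * pi) ^ CARD('n)"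
proof -
  have "(\<lambda>k. \<integral>\<theta>. indicator torus_box \<theta> * (cmod (g k \<theta>))\<^sup>2 \<partial>lborel)
          \<longlonglongrightarrow> (\<integral>\<theta>. indicator torus_box \<theta> \<partial>(lborel :: (real ^ 'n) measure))"
  proof (rule integral_dominated_convergence[where w = "\<lambda>\<theta>. indicator torus_box \<theta> * M\<^sup>2"])
    show "(\<lambda>\<theta>. indicator torus_box \<theta>) \<in> borel_measurable (lborel :: (real ^ 'n) measure)"
      by (rule borel_measurable_indicator) (simp add: torus_box_def)
    show "(\<lambda>\<theta>. indicator torus_box \<theta> * (cmod (g k \<theta>))\<^sup>2) \<in> borel_measurable lborel" for k
      using integrable_torus_box[of "\<lambda>\<theta>. (cmod (g k \<theta>))\<^sup>2"] cont
      by (simp add: continuous_intros borel_measurable_integrable)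
    show "integrable lborel (\<lambda>\<theta>::real ^ 'n. indicator torus_box \<theta> * M\<^sup>2)"
      using integrable_torus_box[of "\<lambda>_. M\<^sup>2"] by simp
    show "AE \<theta> in lborel. norm (indicator torus_box \<theta> * (cmod (g k \<theta>))\<^sup>2) \<le> indicator torus_box \<theta> * M\<^sup>2" for k
      using bound[of k] norm_ge_zero[of "g k _"]
      by (intro AE_I2) (auto simp: indicator_def intro: power_mono order_trans)
    show "AE \<theta> in lborel. (\<lambda>k. indicator torus_box \<theta> * (cmod (g k \<theta>))\<^sup>2) \<longlonglongrightarrow> indicator torus_box \<theta>"
      using lim by eventually_elim (auto intro!: tendsto_eq_intros)
  qed
  then show ?thesis
    using integral_torus_box_const[where 'n='n, of 1] by simp
qed

section \<open>Coefficient estimates for power series on the polydisc\<close>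

definition total_degree :: "('n::finite \<Rightarrow> nat) \<Rightarrow> nat" where
  "total_degree a = (\<Sum>i\<in>UNIV. a i)"

lemma monom_scaleR: "monom (r *\<^sub>R z) a = of_real (r ^ total_degree a) * monom z a"
  unfolding monom_def total_degree_def vector_scaleR_component
  by (simp add: scaleR_conv_of_real power_mult_distrib prod.distrib power_sum)

lemma scaleR_in_polydisc:
  assumes "\<forall>i. cmod (z $ i) \<le> 1" "0 \<le> r" "r < 1"
  shows "r *\<^sub>R z \<in> polydisc"
proof -
  have "r * cmod (z $ i) < 1" for i
    using assms mult_left_le[of "cmod (z $ i)" r] by fastforce
  then show ?thesis
    unfolding polydisc_def using assms(2) by simp
qed

lemma scaleR_torus_pt_in_polydisc: "0 \<le> r \<Longrightarrow> r < 1 \<Longrightarrow> r *\<^sub>R torus_pt \<theta> \<in> polydisc"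
  by (rule scaleR_in_polydisc) (auto simp: torus_pt_def)

lemma norm_coeff_mult_monom_torus:
  "0 \<le> r \<Longrightarrow> norm (c a * monom (r *\<^sub>R torus_pt \<theta>) a) = cmod (c a) * r ^ total_degree a"
  by (simp add: monom_scaleR norm_mult norm_power)

text \<open>Uniformity holds because the moduli of the terms do not depend on the point of the torus.\<close>
lemma fn_partial_sums_uniform_on_torus:
  fixes c :: "('n::finite \<Rightarrow> nat) \<Rightarrow> complex"
  assumes summ: "\<forall>z\<in>polydisc. (\<lambda>a. c a * monom z a) summable_on UNIV"
    and r: "0 \<le> r" "r < 1" and e: "e > 0"
  obtains F0 where "finite F0"
    "\<And>F \<theta>. finite F \<Longrightarrow> F0 \<subseteq> F \<Longrightarrow>
       cmod (fn c (r *\<^sub>R torus_pt \<theta>) - (\<Sum>a\<in>F. c a * monom (r *\<^sub>R torus_pt \<theta>) a)) \<le> e"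
proof -
  define g where "g a = cmod (c a) * r ^ total_degree a" for a
  have "(\<lambda>a. c a * monom (r *\<^sub>R torus_pt 0) a) summable_on UNIV"
    using summ scaleR_torus_pt_in_polydisc[OF r] by blast
  then have "(\<lambda>a. norm (c a * monom (r *\<^sub>R torus_pt 0) a)) summable_on UNIV"
    by (simp add: summable_on_iff_abs_summable_on_complex)
  then have g: "g summable_on UNIV"
    unfolding g_def using r by (simp add: norm_coeff_mult_monom_torus)
  then have "\<forall>\<^sub>F F in finite_subsets_at_top UNIV. dist (sum g F) (infsum g UNIV) < e"
    using e by (intro tendstoD) (simp add: has_sum_def[symmetric])
  then obtain F0 where F0: "finite F0"
    "\<And>F. finite F \<Longrightarrow> F0 \<subseteq> F \<Longrightarrow> dist (sum g F) (infsum g UNIV) < e"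
    unfolding eventually_finite_subsets_at_top by auto
  show ?thesis
  proof (rule that[OF F0(1)])
    fix F and \<theta> :: "real ^ 'n" assume F: "finite F" "F0 \<subseteq> F"
    define h where "h a = c a * monom (r *\<^sub>R torus_pt \<theta>) a" for a
    have norm_h: "(\<lambda>a. norm (h a)) = g"
      using r by (simp add: h_def g_def norm_coeff_mult_monom_torus fun_eq_iff)
    have h: "h summable_on UNIV"
      using summ scaleR_torus_pt_in_polydisc[OF r] unfolding h_def by blast
    have "fn c (r *\<^sub>R torus_pt \<theta>) = infsum h UNIV"
      unfolding fn_def h_def ..
    then have "cmod (fn c (r *\<^sub>R torus_pt \<theta>) - sum h F) = cmod (infsum h (UNIV - F))"
      using infsum_Diff[OF h, of F] F(1) by simp
    also have "\<dots> \<le> infsum g (UNIV - F)"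
      using norm_infsum_bound[of h "UNIV - F"] summable_on_subset_banach[OF g, of "UNIV - F"]
      by (simp add: norm_h)
    also have "\<dots> = infsum g UNIV - sum g F"
      using infsum_Diff[OF g, of F] F(1) by simp
    also have "\<dots> \<le> e"
      using F0(2)[OF F] by (simp add: dist_real_def)
    finally show "cmod (fn c (r *\<^sub>R torus_pt \<theta>) - (\<Sum>a\<in>F. c a * monom (r *\<^sub>R torus_pt \<theta>) a)) \<le> e"
      by (simp add: h_def)
  qed
qed

lemma coeff_sq_sum_le_if_fn_bounded_on_torus:
  fixes c :: "('n::finite \<Rightarrow> nat) \<Rightarrow> complex"
  assumes summ: "\<forall>z\<in>polydisc. (\<lambda>a. c a * monom z a) summable_on UNIV"
    and r: "0 \<le> r" "r < 1"
    and bound: "\<And>\<theta>. cmod (fn c (r *\<^sub>R torus_pt \<theta>)) \<le> K"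
    and G: "finite G"
  shows "(\<Sum>a\<in>G. (cmod (c a))\<^sup>2 * r ^ (2 * total_degree a)) \<le> K\<^sup>2"
proof -
  define u where "u a = c a * of_real (r ^ total_degree a)" for a
  have S: "(\<Sum>a\<in>G. (cmod (c a))\<^sup>2 * r ^ (2 * total_degree a)) = (\<Sum>a\<in>G. (cmod (u a))\<^sup>2)"
    using r by (simp add: u_def norm_mult norm_power power_mult_distrib power_mult mult.commute[of 2])
  have "sqrt (\<Sum>a\<in>G. (cmod (u a))\<^sup>2) \<le> K + e" if e: "e > 0" for e
  proof -
    obtain F0 where F0: "finite F0" "\<And>F \<theta>. finite F \<Longrightarrow> F0 \<subseteq> F \<Longrightarrow>
        cmod (fn c (r *\<^sub>R torus_pt \<theta>) - (\<Sum>a\<in>F. c a * monom (r *\<^sub>R torus_pt \<theta>) a)) \<le> e"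
      using fn_partial_sums_uniform_on_torus[OF summ r e] by blast
    define F where "F = F0 \<union> G"
    have F: "finite F" "F0 \<subseteq> F" "G \<subseteq> F"
      using F0(1) G by (auto simp: F_def)
    have "cmod (\<Sum>a\<in>F. u a * monom (torus_pt \<theta>) a) \<le> K + e" for \<theta>
    proof -
      let ?f = "fn c (r *\<^sub>R torus_pt \<theta>)" and ?p = "\<Sum>a\<in>F. c a * monom (r *\<^sub>R torus_pt \<theta>) a"
      have "(\<Sum>a\<in>F. u a * monom (torus_pt \<theta>) a) = ?p"
        by (simp add: u_def monom_scaleR mult.assoc)
      moreover have "cmod ?p \<le> cmod ?f + cmod (?f - ?p)"
        using norm_triangle_sub[of ?p ?f] by (simp add: norm_minus_commute)
      ultimately show ?thesis
        using bound[of \<theta>] F0(2)[OF F(1,2), of \<theta>] by simp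
    qed
    then have "(\<Sum>a\<in>F. (cmod (u a))\<^sup>2) \<le> (K + e)\<^sup>2"
      by (rule coeff_sq_sum_le_if_torus_poly_bounded[OF F(1)])
    moreover have "(\<Sum>a\<in>G. (cmod (u a))\<^sup>2) \<le> (\<Sum>a\<in>F. (cmod (u a))\<^sup>2)"
      by (rule sum_mono2[OF F(1,3)]) auto
    moreover have "0 \<le> K + e"
      using bound[of 0] e norm_ge_zero[of "fn c (r *\<^sub>R torus_pt 0)"] by linarith
    ultimately show ?thesis
      by (intro real_le_lsqrt) auto
  qed
  then have "sqrt (\<Sum>a\<in>G. (cmod (u a))\<^sup>2) \<le> K"
    by (rule field_le_epsilon)
  then show ?thesis
    unfolding S by (rule sqrt_le_D)
qed

lemma Schur_coeff_sq_sum_le_1: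
  assumes d: "d \<in> Schur" and G: "finite G"
  shows "(\<Sum>a\<in>G. (cmod (d a))\<^sup>2) \<le> 1"
proof -
  have summ: "\<forall>z\<in>polydisc. (\<lambda>a. d a * monom z a) summable_on UNIV"
    and bound: "\<forall>z\<in>polydisc. cmod (fn d z) \<le> 1"
    using d unfolding Schur_def Hinf_def by blast+
  have "\<forall>\<^sub>F r in at_left 1. (\<Sum>a\<in>G. (cmod (d a))\<^sup>2 * r ^ (2 * total_degree a)) \<le> 1"
    using eventually_at_left_real[OF zero_less_one]
  proof eventually_elim
    case (elim r)
    then have "cmod (fn d (r *\<^sub>R torus_pt \<theta>)) \<le> 1" for \<theta>
      using bound scaleR_torus_pt_in_polydisc[of r \<theta>] by simp
    then show ?case
      using coeff_sq_sum_le_if_fn_bounded_on_torus[OF summ, of r 1 G] elim G by simp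
  qed
  moreover have "((\<lambda>r. \<Sum>a\<in>G. (cmod (d a))\<^sup>2 * r ^ (2 * total_degree a))
                    \<longlongrightarrow> (\<Sum>a\<in>G. (cmod (d a))\<^sup>2 * 1 ^ (2 * total_degree a))) (at_left (1::real))"
    by (intro tendsto_intros)
  ultimately show ?thesis
    using tendsto_upperbound by fastforce
qed

lemma Schur_radial_limit_norm_le_1:
  assumes d: "d \<in> Schur" and z0: "\<forall>i. cmod (z0 $ i) \<le> 1"
    and lim: "((\<lambda>r. fn d (r *\<^sub>R z0)) \<longlongrightarrow> L) (at_left 1)"
  shows "norm L \<le> 1"
proof (rule tendsto_upperbound[OF tendsto_norm[OF lim]])
  show "\<forall>\<^sub>F r in at_left 1. norm (fn d (r *\<^sub>R z0)) \<le> 1"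
    using eventually_at_left_real[OF zero_less_one]
  proof eventually_elim
    case (elim r)
    then show ?case
      using d z0 scaleR_in_polydisc[of z0 r] unfolding Schur_def by auto
  qed
qed simp

lemma coeff_eq_0_if_fn_eq_0:
  fixes c :: "('n::finite \<Rightarrow> nat) \<Rightarrow> complex"
  assumes summ: "\<forall>z\<in>polydisc. (\<lambda>a. c a * monom z a) summable_on UNIV"
    and zero: "\<forall>z\<in>polydisc. fn c z = 0"
  shows "c a = 0"
proof -
  have "(\<Sum>b\<in>{a}. (cmod (c b))\<^sup>2 * (1/2) ^ (2 * total_degree b)) \<le> 0\<^sup>2"
    by (rule coeff_sq_sum_le_if_fn_bounded_on_torus[OF summ])
       (use zero scaleR_torus_pt_in_polydisc[of "1/2"] in auto)
  moreover have "(0::real) < (1/2) ^ (2 * total_degree a)"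
    by simp
  ultimately show ?thesis
    by (simp add: mult_le_0_iff)
qed

lemma monom_coordinate_0:
  "monom (\<chi> j. if j = i then 0 else z $ j) a = (if a i = 0 then monom z a else 0)"
proof (cases "a i = 0")
  case True
  then show ?thesis
    unfolding monom_def by (auto intro!: prod.cong)
next
  case False
  then show ?thesis
    unfolding monom_def by (auto simp: zero_power intro!: prod_zero[of UNIV] exI[of _ i])
qed

text \<open>The terms with \<open>a\<^sub>i \<noteq> 0\<close> sum to \<open>fn c z - fn c z'\<close>, where \<open>z'\<close> is \<open>z\<close> with \<open>z\<^sub>i\<close> replaced by \<open>0\<close>.\<close>
lemma coeff_eq_0_if_independent:
  fixes c :: "('n::finite \<Rightarrow> nat) \<Rightarrow> complex"
  assumes summ: "\<forall>z\<in>polydisc. (\<lambda>a. c a * monom z a) summable_on UNIV"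
    and indep: "\<forall>z\<in>polydisc. \<forall>w\<in>polydisc. (\<forall>j. j \<noteq> i \<longrightarrow> z $ j = w $ j) \<longrightarrow> fn c z = fn c w"
    and b: "b i \<noteq> 0"
  shows "c b = 0"
proof -
  define A :: "('n \<Rightarrow> nat) set" where "A = {a. a i \<noteq> 0}"
  define e where "e a = (if a \<in> A then c a else 0)" for a
  have summ_A: "(\<lambda>a. c a * monom z a) summable_on A" "(\<lambda>a. c a * monom z a) summable_on - A"
    if "z \<in> polydisc" for z
    using summ that summable_on_subset_banach by blast+
  have fn_e: "fn e z = (\<Sum>\<^sub>\<infinity>a\<in>A. c a * monom z a)" for z
    unfolding fn_def e_def by (rule infsum_cong_neutral) auto
  have "(\<lambda>a. e a * monom z a) summable_on UNIV" if "z \<in> polydisc" for z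
    using summ_A(1)[OF that]
    by (rule summable_on_cong_neutral[where S = A and T = UNIV, THEN iffD1, rotated -1]) (auto simp: e_def)
  moreover have "fn e z = 0" if z: "z \<in> polydisc" for z
  proof -
    define z' where "z' = (\<chi> j. if j = i then 0 else z $ j)"
    have z': "z' \<in> polydisc"
      using z unfolding polydisc_def z'_def by simp
    have "monom z' a = (if a \<in> A then 0 else monom z a)" for a
      unfolding z'_def A_def monom_coordinate_0 by simp
    then have "fn c z' = (\<Sum>\<^sub>\<infinity>a\<in>- A. c a * monom z a)"
      unfolding fn_def by (intro infsum_cong_neutral) auto
    moreover have "fn c z = (\<Sum>\<^sub>\<infinity>a\<in>A. c a * monom z a) + (\<Sum>\<^sub>\<infinity>a\<in>- A. c a * monom z a)"
      unfolding fn_def using infsum_Un_disjoint[OF summ_A[OF z]] by simp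
    moreover have "fn c z = fn c z'"
    proof -
      have "\<forall>j. j \<noteq> i \<longrightarrow> z $ j = z' $ j"
        by (simp add: z'_def)
      then show ?thesis
        using indep z z' by blast
    qed
    ultimately show ?thesis
      by (simp add: fn_e)
  qed
  ultimately have "e b = 0"
    by (intro coeff_eq_0_if_fn_eq_0) blast+
  then show ?thesis
    using b by (simp add: e_def A_def)
qed

text \<open>By Parseval, the square integrals of partial sums on tori of radius \<open>r \<rightarrow> 1\<close> are bounded by
  coefficient square sums; by dominated convergence they tend to the volume of the torus, since the
  boundary values are unimodular almost everywhere.\<close>
lemma inner_fun_coeff_sq_sum_gt:
  fixes c :: "('n::finite \<Rightarrow> nat) \<Rightarrow> complex"
  assumes inner: "inner_fun c" and e: "e > 0"
  obtains F where "finite F" "1 - e < (\<Sum>a\<in>F. (cmod (c a))\<^sup>2)"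
proof -
  have summ: "\<forall>z\<in>polydisc. (\<lambda>a. c a * monom z a) summable_on UNIV"
    and "\<exists>M. \<forall>z\<in>polydisc. cmod (fn c z) \<le> M"
    and boundary: "AE \<theta> in lborel. \<exists>L. ((\<lambda>r. fn c (r *\<^sub>R torus_pt \<theta>)) \<longlongrightarrow> L) (at_left 1) \<and> cmod L = 1"
    using inner unfolding inner_fun_def Hinf_def by blast+
  then obtain M where M: "\<forall>z\<in>polydisc. cmod (fn c z) \<le> M"
    by blast
  define r where "r k = 1 - 1 / real (Suc k)" for k
  have r: "0 \<le> r k" "r k < 1" for k
    by (auto simp: r_def field_simps)
  have "r \<longlonglongrightarrow> 1"
    unfolding r_def using LIMSEQ_inverse_real_of_nat_add_minus[of 1] by (simp add: inverse_eq_divide)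
  then have r_lim: "filterlim r (at_left 1) sequentially"
    using r(2) by (intro tendsto_imp_filterlim_at_left) auto
  have "\<forall>k. \<exists>F. finite F \<and> (\<forall>\<theta>. cmod (fn c (r k *\<^sub>R torus_pt \<theta>)
           - (\<Sum>a\<in>F. c a * monom (r k *\<^sub>R torus_pt \<theta>) a)) \<le> 1 / real (Suc k))"
  proof
    fix k
    obtain F0 where "finite F0" "\<And>F \<theta>. finite F \<Longrightarrow> F0 \<subseteq> F \<Longrightarrow> cmod (fn c (r k *\<^sub>R torus_pt \<theta>)
           - (\<Sum>a\<in>F. c a * monom (r k *\<^sub>R torus_pt \<theta>) a)) \<le> 1 / real (Suc k)"
      using fn_partial_sums_uniform_on_torus[OF summ r[of k], where e = "1 / real (Suc k)"] by auto
    then show "\<exists>F. finite F \<and> (\<forall>\<theta>. cmod (fn c (r k *\<^sub>R torus_pt \<theta>)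
           - (\<Sum>a\<in>F. c a * monom (r k *\<^sub>R torus_pt \<theta>) a)) \<le> 1 / real (Suc k))"
      by blast
  qed
  then obtain F where F: "\<And>k. finite (F k)" and approx: "\<And>k \<theta>. cmod (fn c (r k *\<^sub>R torus_pt \<theta>)
           - (\<Sum>a\<in>F k. c a * monom (r k *\<^sub>R torus_pt \<theta>) a)) \<le> 1 / real (Suc k)"
    by (auto dest!: choice)
  define u where "u k a = c a * of_real (r k ^ total_degree a)" for k a
  define g where "g k \<theta> = (\<Sum>a\<in>F k. u k a * monom (torus_pt \<theta>) a)" for k \<theta>
  have g: "g k \<theta> = (\<Sum>a\<in>F k. c a * monom (r k *\<^sub>R torus_pt \<theta>) a)" for k \<theta>
    by (simp add: g_def u_def monom_scaleR mult.assoc)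
  have "(\<lambda>k. \<integral>\<theta>. indicator torus_box \<theta> * (cmod (g k \<theta>))\<^sup>2 \<partial>lborel) \<longlonglongrightarrow> (2 * pi) ^ CARD('n)"
  proof (rule integral_torus_box_sq_tendsto)
    show "continuous_on UNIV (g k)" for k
      unfolding g_def by (intro continuous_intros)
    show "cmod (g k \<theta>) \<le> M + 1" for k \<theta>
    proof -
      have "cmod (g k \<theta>) \<le> cmod (fn c (r k *\<^sub>R torus_pt \<theta>)) + cmod (fn c (r k *\<^sub>R torus_pt \<theta>) - g k \<theta>)"
        using norm_triangle_sub[of "g k \<theta>" "fn c (r k *\<^sub>R torus_pt \<theta>)"] by (simp add: norm_minus_commute)
      moreover have "cmod (fn c (r k *\<^sub>R torus_pt \<theta>)) \<le> M"
        using M scaleR_torus_pt_in_polydisc[OF r] by blast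
      moreover have "1 / real (Suc k) \<le> 1"
        by simp
      ultimately show ?thesis
        using approx[of k \<theta>] unfolding g by linarith
    qed
    show "AE \<theta> in lborel. \<exists>L. (\<lambda>k. g k \<theta>) \<longlonglongrightarrow> L \<and> cmod L = 1"
      using boundary
    proof eventually_elim
      case (elim \<theta>)
      then obtain L where L: "((\<lambda>r. fn c (r *\<^sub>R torus_pt \<theta>)) \<longlongrightarrow> L) (at_left 1)" "cmod L = 1"
        by blast
      have "(\<lambda>k. fn c (r k *\<^sub>R torus_pt \<theta>)) \<longlonglongrightarrow> L"
        using filterlim_compose[OF L(1) r_lim] by (simp add: o_def)
      moreover have "(\<lambda>k. fn c (r k *\<^sub>R torus_pt \<theta>) - g k \<theta>) \<longlonglongrightarrow> 0"
        using approx unfolding g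
        by (intro Lim_null_comparison[OF _ LIMSEQ_inverse_real_of_nat]) (simp add: inverse_eq_divide)
      ultimately have "(\<lambda>k. g k \<theta>) \<longlonglongrightarrow> L"
        using tendsto_diff by fastforce
      then show ?case
        using L(2) by blast
    qed
  qed
  moreover have "(2 * pi) ^ CARD('n) * (1 - e) < (2 * pi) ^ CARD('n)"
    using e by simp
  ultimately have "\<forall>\<^sub>F k in sequentially. (2 * pi) ^ CARD('n) * (1 - e)
                     < (\<integral>\<theta>. indicator torus_box \<theta> * (cmod (g k \<theta>))\<^sup>2 \<partial>lborel)"
    by (rule order_tendstoD(1))
  then obtain k where "(2 * pi) ^ CARD('n) * (1 - e)
                         < (\<integral>\<theta>. indicator torus_box \<theta> * (cmod (g k \<theta>))\<^sup>2 \<partial>lborel)"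
    by (meson eventually_sequentially order_refl)
  also have "\<dots> = (2 * pi) ^ CARD('n) * (\<Sum>a\<in>F k. (cmod (u k a))\<^sup>2)"
    unfolding g_def by (rule parseval_torus_box[OF F])
  also have "\<dots> \<le> (2 * pi) ^ CARD('n) * (\<Sum>a\<in>F k. (cmod (c a))\<^sup>2)"
    using r[of k] by (intro mult_left_mono sum_mono power_mono)
      (auto simp: u_def norm_mult norm_power intro!: mult_left_le power_le_one)
  finally show ?thesis
    using F by (intro that) simp_all
qed

section \<open>Multiplication by monomials and the quotient module\<close>

lemma finite_Collect_le_fun: "finite {b :: 'n::finite \<Rightarrow> nat. b \<le> a}"
proof (rule finite_subset)
  show "{b. b \<le> a} \<subseteq> PiE UNIV (\<lambda>i. {..a i})"
    by (auto simp: le_fun_def PiE_def extensional_def)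
qed (intro finite_PiE, auto)

lemma conv_mono_coeff: "conv (mono_coeff g) c a = (if g \<le> a then c (\<lambda>j. a j - g j) else 0)"
proof -
  have "conv (mono_coeff g) c a = (\<Sum>b\<in>{b. b \<le> a}. if g = b then c (\<lambda>j. a j - b j) else 0)"
    unfolding conv_def mono_coeff_def by (intro sum.cong) auto
  then show ?thesis
    using finite_Collect_le_fun[of a] by (simp add: sum.delta)
qed

lemma has_sum_sum:
  fixes f :: "'i \<Rightarrow> 'a \<Rightarrow> 'b::topological_comm_monoid_add"
  assumes "finite I" "\<And>i. i \<in> I \<Longrightarrow> (f i has_sum s i) A"
  shows "((\<lambda>x. \<Sum>i\<in>I. f i x) has_sum (\<Sum>i\<in>I. s i)) A"
  using assms
proof (induction I rule: finite_induct)
  case (insert j I)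
  then have "(f j has_sum s j) A" "((\<lambda>x. \<Sum>i\<in>I. f i x) has_sum (\<Sum>i\<in>I. s i)) A"
    by simp_all
  then show ?case
    using insert.hyps by (simp add: has_sum_add)
qed simp

lemma has_sum_conv_mono_coeff:
  fixes c :: "('n::finite \<Rightarrow> nat) \<Rightarrow> complex"
  assumes summ: "(\<lambda>a. c a * monom z a) summable_on UNIV"
  shows "((\<lambda>a. conv (mono_coeff g) c a * monom z a) has_sum monom z g * fn c z) UNIV"
proof -
  have "((\<lambda>b. monom z g * (c b * monom z b)) has_sum monom z g * fn c z) UNIV"
    unfolding fn_def by (intro has_sum_cmult_right has_sum_infsum summ)
  moreover have "((\<lambda>a. conv (mono_coeff g) c a * monom z a) has_sum X) {a. g \<le> a}
                  \<longleftrightarrow> ((\<lambda>b. monom z g * (c b * monom z b)) has_sum X) UNIV" for X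
  proof (rule has_sum_reindex_bij_witness[where i = "\<lambda>b j. g j + b j" and j = "\<lambda>a j. a j - g j"])
    fix a assume "a \<in> {a. g \<le> a}"
    then have "\<forall>j. g j \<le> a j"
      by (simp add: le_fun_def)
    then show "monom z g * (c (\<lambda>j. a j - g j) * monom z (\<lambda>j. a j - g j)) = conv (mono_coeff g) c a * monom z a"
      unfolding conv_mono_coeff monom_def le_fun_def
      by (simp add: power_add[symmetric] prod.distrib[symmetric] ac_simps)
  qed (auto simp: le_fun_def fun_eq_iff)
  ultimately have "((\<lambda>a. conv (mono_coeff g) c a * monom z a) has_sum monom z g * fn c z) {a. g \<le> a}"
    by blast
  then show ?thesis
    by (rule has_sum_cong_neutral[THEN iffD1, rotated -1]) (auto simp: conv_mono_coeff)
qed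

lemma fn_sum_conv_mono_coeff:
  fixes c :: "'i \<Rightarrow> ('n::finite \<Rightarrow> nat) \<Rightarrow> complex"
  assumes I: "finite I" and summ: "\<And>i. i \<in> I \<Longrightarrow> (\<lambda>a. c i a * monom z a) summable_on UNIV"
  shows "fn (\<lambda>a. \<Sum>i\<in>I. w i * conv (mono_coeff (g i)) (c i) a) z
           = (\<Sum>i\<in>I. w i * monom z (g i) * fn (c i) z)"
proof -
  have "((\<lambda>a. \<Sum>i\<in>I. w i * (conv (mono_coeff (g i)) (c i) a * monom z a))
          has_sum (\<Sum>i\<in>I. w i * (monom z (g i) * fn (c i) z))) UNIV"
    using summ by (intro has_sum_sum[OF I] has_sum_cmult_right has_sum_conv_mono_coeff)
  then show ?thesis
    unfolding fn_def by (simp add: infsumI sum_distrib_right mult.assoc)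
qed

lemma mono_coeff_0_in_Qmod: "mono_coeff (\<lambda>_. 0) \<in> Qmod"
proof -
  have "(\<lambda>a. (cmod (mono_coeff (\<lambda>_. 0) a))\<^sup>2) summable_on {\<lambda>_. 0}"
    by simp
  then have "(\<lambda>a. (cmod (mono_coeff (\<lambda>_. 0) a))\<^sup>2) summable_on UNIV"
    by (rule summable_on_cong_neutral[THEN iffD1, rotated -1]) (auto simp: mono_coeff_def)
  moreover have "Tz_adj_prod (mono_coeff (\<lambda>_. 0)) = (\<lambda>_. 0)"
    by (auto simp: Tz_adj_prod_def mono_coeff_def fun_eq_iff)
  ultimately show ?thesis
    unfolding Qmod_def H2_def by simp
qed

lemma Toep_mono_coeff_0: "Toep e (mono_coeff (\<lambda>_. 0)) = e"
proof
  fix a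
  have "(\<lambda>i. a i - b i) = (\<lambda>_. 0) \<longleftrightarrow> b = a" if "b \<le> a" for b :: "'a \<Rightarrow> nat"
    using that by (auto simp: fun_eq_iff le_fun_def intro: order.antisym)
  then have "Toep e (mono_coeff (\<lambda>_. 0)) a = (\<Sum>b\<in>{b. b \<le> a}. if b = a then e a else 0)"
    unfolding Toep_def conv_def mono_coeff_def by (intro sum.cong refl) auto
  then show "Toep e (mono_coeff (\<lambda>_. 0)) a = e a"
    using finite_Collect_le_fun[of a] by (simp add: sum.delta')
qed

lemma has_lift_imp_coeff_eq:
  assumes "has_lift c"
  obtains d where "d \<in> Schur" "\<And>a. \<not> (\<forall>i. 1 \<le> a i) \<Longrightarrow> d a = c a"
proof -
  obtain d where d: "d \<in> Schur" and "projQ (Toep d (mono_coeff (\<lambda>_. 0))) = projQ (Toep c (mono_coeff (\<lambda>_. 0)))"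
    using assms mono_coeff_0_in_Qmod unfolding has_lift_def by blast
  then have "projQ d = projQ c"
    by (simp only: Toep_mono_coeff_0)
  then show ?thesis
    by (intro that[OF d]) (auto simp: projQ_def fun_eq_iff split: if_splits)
qed

section \<open>Coefficients of the symbol\<close>

text \<open>\<open>zeta_exp i\<close> is the exponent of the monomial \<open>\<zeta>\<^sub>i\<close>, the product of all \<open>z\<^sub>j\<close> with
  \<open>j \<noteq> i\<close>, and \<open>zeta_sum w c\<close> is the coefficient family of \<open>\<Sum>\<^sub>i w\<^sub>i \<zeta>\<^sub>i \<phi>\<^sub>i\<close> when \<open>c i\<close> is that
  of \<open>\<phi>\<^sub>i\<close>.\<close>
definition zeta_exp :: "'n \<Rightarrow> 'n \<Rightarrow> nat" where
  "zeta_exp i = (\<lambda>j. if j = i then 0 else 1)"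

definition zeta_shift :: "'n \<Rightarrow> ('n \<Rightarrow> nat) \<Rightarrow> 'n \<Rightarrow> nat" where
  "zeta_shift i b = (\<lambda>j. zeta_exp i j + b j)"

definition zeta_sum :: "('n::finite \<Rightarrow> complex) \<Rightarrow> ('n \<Rightarrow> ('n \<Rightarrow> nat) \<Rightarrow> complex) \<Rightarrow> ('n \<Rightarrow> nat) \<Rightarrow> complex"
  where "zeta_sum w c a = (\<Sum>i\<in>UNIV. w i * conv (mono_coeff (zeta_exp i)) (c i) a)"

lemma zeta_shift_self [simp]: "zeta_shift i b i = b i"
  by (simp add: zeta_shift_def zeta_exp_def)

lemma inj_on_zeta_shift: "inj_on (\<lambda>(i, b). zeta_shift i b) (SIGMA i:UNIV. {b. b i = 0})"
proof (rule inj_onI, clarsimp)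
  fix i j and b b' :: "'n \<Rightarrow> nat"
  assume b: "b i = 0" "b' j = 0" and eq: "zeta_shift i b = zeta_shift j b'"
  have "zeta_shift i b i = zeta_shift j b' i"
    using eq by simp
  then have "i = j"
    using b by (auto simp: zeta_shift_def zeta_exp_def split: if_splits)
  with eq show "i = j \<and> b = b'"
    by (auto simp: zeta_shift_def fun_eq_iff)
qed

lemma monom_zeta_exp: "monom z (zeta_exp i) = (\<Prod>j\<in>UNIV - {i}. z $ j)"
  unfolding monom_def zeta_exp_def by (simp add: prod.remove[of UNIV i] if_distrib prod.If_cases Compl_eq_Diff_UNIV)

lemma zeta_sum_zeta_shift:
  assumes "b i = 0"
  shows "zeta_sum w c (zeta_shift i b) = w i * c i b"
proof -
  have "\<not> zeta_exp j \<le> zeta_shift i b" if "j \<noteq> i" for j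
    using that assms by (auto simp: le_fun_def zeta_exp_def dest!: spec[of _ i])
  then have "w j * conv (mono_coeff (zeta_exp j)) (c j) (zeta_shift i b) = (if j = i then w i * c i b else 0)" for j
    by (auto simp: conv_mono_coeff le_fun_def zeta_shift_def)
  then show ?thesis
    unfolding zeta_sum_def by simp
qed

lemma zeta_sum_interior:
  assumes indep: "\<And>i b. b i \<noteq> 0 \<Longrightarrow> c i b = 0" and a: "\<forall>i. 1 \<le> a i"
  shows "zeta_sum w c a = 0"
proof -
  have c0: "c i (\<lambda>j. a j - zeta_exp i j) = 0" for i
    using indep a by (simp add: zeta_exp_def Suc_le_eq)
  then show ?thesis
    unfolding zeta_sum_def conv_mono_coeff c0 by simp
qed

lemma fn_zeta_sum:
  assumes "\<And>i. (\<lambda>a. c i a * monom z a) summable_on UNIV"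
  shows "fn (zeta_sum w c) z = (\<Sum>i\<in>UNIV. w i * monom z (zeta_exp i) * fn (c i) z)"
  unfolding zeta_sum_def[abs_def] using assms by (intro fn_sum_conv_mono_coeff) auto

lemma tendsto_fn_zeta_sum_radial:
  assumes z0: "\<forall>i. cmod (z0 $ i) \<le> 1"
    and summ: "\<And>i. \<forall>z\<in>polydisc. (\<lambda>a. c i a * monom z a) summable_on UNIV"
    and radial: "\<And>i. ((\<lambda>r. fn (c i) (r *\<^sub>R z0)) \<longlongrightarrow> v i) (at_left 1)"
  shows "((\<lambda>r. fn (zeta_sum w c) (r *\<^sub>R z0)) \<longlongrightarrow> (\<Sum>i\<in>UNIV. w i * monom z0 (zeta_exp i) * v i)) (at_left 1)"
proof -
  have "\<forall>\<^sub>F r in at_left 1. fn (zeta_sum w c) (r *\<^sub>R z0)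
          = (\<Sum>i\<in>UNIV. w i * monom (r *\<^sub>R z0) (zeta_exp i) * fn (c i) (r *\<^sub>R z0))"
    using eventually_at_left_real[OF zero_less_one]
  proof eventually_elim
    case (elim r)
    then have "r *\<^sub>R z0 \<in> polydisc"
      using z0 by (intro scaleR_in_polydisc) auto
    then show ?case
      using summ by (intro fn_zeta_sum) blast
  qed
  moreover have "((\<lambda>r. monom (r *\<^sub>R z0) (zeta_exp i)) \<longlongrightarrow> monom z0 (zeta_exp i)) (at_left (1::real))" for i
    unfolding monom_scaleR by (auto intro!: tendsto_eq_intros)
  ultimately show ?thesis
    using radial by (auto intro!: tendsto_eq_intros simp: tendsto_cong)
qed

text \<open>The shifts by the different \<open>\<zeta>\<^sub>i\<close> have disjoint supports, so the coefficients of \<open>d\<close> off the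
  multi-indices with all entries positive already have square sum at least \<open>\<Sum>\<^sub>i w\<^sub>i\<^sup>2 = 1\<close>.\<close>
lemma coeff_interior_eq_0:
  fixes d :: "('n::finite \<Rightarrow> nat) \<Rightarrow> complex" and c :: "'n \<Rightarrow> ('n \<Rightarrow> nat) \<Rightarrow> complex"
    and w :: "'n \<Rightarrow> real"
  assumes d_sq: "\<And>G. finite G \<Longrightarrow> (\<Sum>a\<in>G. (cmod (d a))\<^sup>2) \<le> 1"
    and d_shift: "\<And>i b. b i = 0 \<Longrightarrow> cmod (d (zeta_shift i b)) = w i * cmod (c i b)"
    and w_sq: "(\<Sum>i\<in>UNIV. (w i)\<^sup>2) = 1"
    and c_indep: "\<And>i b. b i \<noteq> 0 \<Longrightarrow> c i b = 0"
    and c_sq: "\<And>i e. e > 0 \<Longrightarrow> \<exists>F. finite F \<and> 1 - e < (\<Sum>b\<in>F. (cmod (c i b))\<^sup>2)"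
    and a: "\<forall>i. 1 \<le> a i"
  shows "d a = 0"
proof (rule ccontr)
  assume "d a \<noteq> 0"
  define \<delta> where "\<delta> = (cmod (d a))\<^sup>2"
  have \<delta>: "\<delta> > 0"
    using \<open>d a \<noteq> 0\<close> by (simp add: \<delta>_def)
  obtain F where F: "\<And>i. finite (F i)" "\<And>i. 1 - \<delta> / 2 < (\<Sum>b\<in>F i. (cmod (c i b))\<^sup>2)"
    using c_sq[where e = "\<delta> / 2"] \<delta> by (metis half_gt_zero)
  define B where "B i = {b \<in> F i. b i = 0}" for i
  define U where "U = (\<lambda>(i, b). zeta_shift i b) ` (SIGMA i:UNIV. B i)"
  have "finite U"
    using F(1) by (simp add: U_def B_def)
  moreover have "a \<notin> U"
  proof
    assume "a \<in> U"
    then obtain i b where "b i = 0" "a = zeta_shift i b"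
      by (auto simp: U_def B_def)
    then show False
      using a by (metis zeta_shift_self not_one_le_zero)
  qed
  ultimately have "\<delta> + (\<Sum>x\<in>U. (cmod (d x))\<^sup>2) \<le> 1"
    using d_sq[of "insert a U"] by (simp add: \<delta>_def)
  moreover have "(\<Sum>x\<in>U. (cmod (d x))\<^sup>2) = (\<Sum>i\<in>UNIV. (w i)\<^sup>2 * (\<Sum>b\<in>F i. (cmod (c i b))\<^sup>2))"
  proof -
    have B_F: "(\<Sum>b\<in>B i. (cmod (c i b))\<^sup>2) = (\<Sum>b\<in>F i. (cmod (c i b))\<^sup>2)" for i
      unfolding B_def using F(1) c_indep by (intro sum.mono_neutral_left) auto
    have "(\<Sum>x\<in>U. (cmod (d x))\<^sup>2) = (\<Sum>(i, b)\<in>(SIGMA i:UNIV. B i). (cmod (d (zeta_shift i b)))\<^sup>2)"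
      unfolding U_def using inj_on_zeta_shift
      by (subst sum.reindex) (auto simp: B_def case_prod_unfold intro: inj_on_subset)
    also have "\<dots> = (\<Sum>i\<in>UNIV. (w i)\<^sup>2 * (\<Sum>b\<in>B i. (cmod (c i b))\<^sup>2))"
      using F(1) by (simp add: sum.Sigma[symmetric] B_def d_shift power_mult_distrib sum_distrib_left)
    finally show ?thesis
      by (simp add: B_F)
  qed
  moreover have "(\<Sum>i\<in>UNIV. (w i)\<^sup>2 * (1 - \<delta> / 2)) \<le> (\<Sum>i\<in>UNIV. (w i)\<^sup>2 * (\<Sum>b\<in>F i. (cmod (c i b))\<^sup>2))"
    using F(2) by (intro sum_mono mult_left_mono) (auto intro: less_imp_le)
  ultimately show False
    using w_sq \<delta> by (simp add: sum_distrib_right[symmetric])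
qed

lemma Schur_eq_zeta_sum_if_eq_off_interior:
  fixes c :: "'n::finite \<Rightarrow> ('n \<Rightarrow> nat) \<Rightarrow> complex"
  assumes d: "d \<in> Schur" and d_eq: "\<And>a. \<not> (\<forall>i. 1 \<le> a i) \<Longrightarrow> d a = zeta_sum w c a"
    and inner: "\<And>i. inner_fun (c i)" and c_indep: "\<And>i b. b i \<noteq> 0 \<Longrightarrow> c i b = 0"
    and w_sq: "(\<Sum>i\<in>UNIV. (cmod (w i))\<^sup>2) = 1"
  shows "d = zeta_sum w c"
proof
  fix a
  show "d a = zeta_sum w c a"
  proof (cases "\<forall>i. 1 \<le> a i")
    case True
    have d_shift: "cmod (d (zeta_shift i b)) = cmod (w i) * cmod (c i b)" if b: "b i = 0" for i b
    proof -
      have "\<not> (\<forall>j. 1 \<le> zeta_shift i b j)"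
        using b by (metis zeta_shift_self not_one_le_zero)
      then show ?thesis
        using d_eq zeta_sum_zeta_shift[of b i w c, OF b] by (simp add: norm_mult)
    qed
    have c_sq: "\<exists>F. finite F \<and> 1 - e < (\<Sum>b\<in>F. (cmod (c i b))\<^sup>2)" if "e > 0" for i e
      using inner_fun_coeff_sq_sum_gt[OF inner that] by blast
    have "d a = 0"
      using Schur_coeff_sq_sum_le_1[OF d] d_shift w_sq c_indep c_sq True
      by (rule coeff_interior_eq_0)
    then show ?thesis
      using True c_indep by (simp add: zeta_sum_interior)
  qed (rule d_eq)
qed

lemma sum_gt_1_if_sum_sq_eq_1:
  fixes \<alpha> :: "'a \<Rightarrow> real"
  assumes S: "finite S" and nonneg: "\<And>i. i \<in> S \<Longrightarrow> 0 \<le> \<alpha> i"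
    and pq: "p \<in> S" "q \<in> S" "p \<noteq> q" "\<alpha> p \<noteq> 0" "\<alpha> q \<noteq> 0"
    and sq: "(\<Sum>i\<in>S. (\<alpha> i)\<^sup>2) = 1"
  shows "1 < (\<Sum>i\<in>S. \<alpha> i)"
proof -
  define A where "A = (\<Sum>i\<in>S. \<alpha> i)"
  have le_A: "\<alpha> i \<le> A" if "i \<in> S" for i
    unfolding A_def using S nonneg that by (intro member_le_sum) auto
  have "\<alpha> p + \<alpha> q = (\<Sum>i\<in>{p, q}. \<alpha> i)"
    using pq by simp
  also have "\<dots> \<le> A"
    unfolding A_def using S pq nonneg by (intro sum_mono2) auto
  finally have "\<alpha> p + \<alpha> q \<le> A" .
  moreover have pos: "0 < \<alpha> p" "0 < \<alpha> q"
    using pq nonneg by (simp_all add: order_less_le)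
  ultimately have "\<alpha> p < A"
    by linarith
  then have "(\<Sum>i\<in>S. \<alpha> i * \<alpha> i) < (\<Sum>i\<in>S. \<alpha> i * A)"
    using pq nonneg le_A pos
    by (intro sum_strict_mono_ex1[OF S]) (auto intro!: mult_left_mono mult_strict_left_mono bexI[of _ p])
  then have "1 < A * A"
    using sq by (simp add: A_def power2_eq_square sum_distrib_right)
  moreover have "0 \<le> A"
    unfolding A_def using nonneg by (simp add: sum_nonneg)
  ultimately have "1 < A"
    using mult_le_one[of A A] by (auto simp: not_less[symmetric])
  then show ?thesis
    by (simp add: A_def)
qed

theorem proposition8p2:
  fixes \<alpha> :: "'n::finite \<Rightarrow> real"
    and c :: "'n \<Rightarrow> ('n \<Rightarrow> nat) \<Rightarrow> complex"
    and z0 :: "complex ^ 'n"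
    and v :: "'n \<Rightarrow> complex"
  assumes n_gt1: "CARD('n) > 1"
    and alpha_nonneg: "\<forall>i. \<alpha> i \<ge> 0"
    and alpha_pq: "\<exists>p q. p \<noteq> q \<and> \<alpha> p \<noteq> 0 \<and> \<alpha> q \<noteq> 0"
    and alpha_norm: "(\<Sum>i\<in>UNIV. (\<alpha> i)\<^sup>2) = 1"
    and z0_torus: "\<forall>i. cmod (z0 $ i) = 1"
    and inner: "\<forall>i. inner_fun (c i)"
    and indep: "\<forall>i. \<forall>z\<in>polydisc. \<forall>w\<in>polydisc.
                   (\<forall>j. j \<noteq> i \<longrightarrow> z $ j = w $ j) \<longrightarrow> fn (c i) z = fn (c i) w"
    and radial: "\<forall>i. ((\<lambda>r. fn (c i) (r *\<^sub>R z0)) \<longlongrightarrow> v i) (at_left 1)"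
    and v_unimod: "\<forall>i. cmod (v i) = 1"
  defines "\<phi> \<equiv> (\<lambda>a. \<Sum>i\<in>UNIV. (complex_of_real (\<alpha> i) * cnj ((\<Prod>j\<in>UNIV - {i}. z0 $ j) * v i)) *
                 conv (mono_coeff (\<lambda>j. if j = i then 0 else 1)) (c i) a)"
  shows "\<not> has_lift \<phi>"
proof
  assume "has_lift \<phi>"
  then obtain d where d: "d \<in> Schur" and d_eq: "\<And>a. \<not> (\<forall>i. 1 \<le> a i) \<Longrightarrow> d a = \<phi> a"
    by (elim has_lift_imp_coeff_eq) blast
  define w where "w i = complex_of_real (\<alpha> i) * cnj ((\<Prod>j\<in>UNIV - {i}. z0 $ j) * v i)" for i
  have \<phi>_eq: "\<phi> = zeta_sum w c"
    unfolding \<phi>_def w_def zeta_sum_def[abs_def] zeta_exp_def ..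
  have summ: "\<forall>z\<in>polydisc. (\<lambda>a. c i a * monom z a) summable_on UNIV" for i
    using inner unfolding inner_fun_def Hinf_def by blast
  have unimodular: "cmod ((\<Prod>j\<in>UNIV - {i}. z0 $ j) * v i) = 1" for i
    using z0_torus v_unimod by (simp add: norm_mult prod_norm[symmetric])
  have norm_w: "cmod (w i) = \<alpha> i" for i
    unfolding w_def norm_mult[of "complex_of_real (\<alpha> i)"] complex_mod_cnj unimodular
    using alpha_nonneg by simp
  have c_indep: "c i b = 0" if "b i \<noteq> 0" for i b
    using coeff_eq_0_if_independent[OF summ] indep that by blast
  have "(\<Sum>i\<in>UNIV. (cmod (w i))\<^sup>2) = 1"
    unfolding norm_w by (rule alpha_norm)
  with d d_eq inner c_indep have "d = \<phi>"
    unfolding \<phi>_eq by (intro Schur_eq_zeta_sum_if_eq_off_interior) auto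
  have "w i * monom z0 (zeta_exp i) * v i = complex_of_real (\<alpha> i)" for i
    using unimodular[of i] complex_norm_square[of "(\<Prod>j\<in>UNIV - {i}. z0 $ j) * v i"]
    by (simp add: w_def monom_zeta_exp mult_ac)
  then have "((\<lambda>r. fn d (r *\<^sub>R z0)) \<longlongrightarrow> (\<Sum>i\<in>UNIV. complex_of_real (\<alpha> i))) (at_left 1)"
    using tendsto_fn_zeta_sum_radial[of z0 c v w] z0_torus summ radial by (simp add: \<open>d = \<phi>\<close> \<phi>_eq)
  then have "norm (\<Sum>i\<in>UNIV. complex_of_real (\<alpha> i)) \<le> 1"
    using d z0_torus by (intro Schur_radial_limit_norm_le_1) auto
  moreover obtain p q where "p \<noteq> q" "\<alpha> p \<noteq> 0" "\<alpha> q \<noteq> 0"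
    using alpha_pq by blast
  ultimately show False
    using sum_gt_1_if_sum_sq_eq_1[of UNIV \<alpha> p q] alpha_nonneg alpha_norm by (simp flip: of_real_sum)
qed

end
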